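(* Let $\pi(m)=(1/2)^m$ for $m\in\mathbb{N}^+$ (and $\pi(m)=0$ otherwise), and let the proposal be $q(m,\{m+1\})=\theta=1-q(m,\{m-1\})$ for $m\in\mathbb{Z}$, with $\theta\in(0,1)$. Take $N=1$ and homogeneous weights $W_{m,1}=W=(b-\varepsilon)\,\mathrm{Ber}(s)+\varepsilon$ for all $m$, where $b>1$, $\varepsilon\in(0,1)$, $\mathrm{Ber}(s)$ is a Bernoulli random variable with parameter $s\in(0,1)$, and $s=\frac{1-\varepsilon}{b-\varepsilon}$ so that $\mathbb{E}[W]=1$. Then there exist values of $b$, $\varepsilon$ and $\theta$ for which the Markov chain generated by the noisy kernel $\tilde P_1$ is transient.
   Context: Noisy Metropolis–Hastings kernel $\tilde P_N$: from state $m$, propose $Y\sim q(m,\cdot)$, draw independent weights $W\sim Q_{m,N}$, $U\sim Q_{Y,N}$ (the laws of $W_{m,N}$, $W_{Y,N}$), and move to $Y$ with probability $\min\{1,\frac{\pi(Y)q(Y,m)}{\pi(m)q(m,Y)}\cdot\frac{U}{W}\}$, otherwise stay at $m$ (proposals outside $\mathbb{N}^+$ have $\pi(Y)=0$ and are rejected). *)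

theory Defs
  imports "HOL-Probability.Probability"
begin

definition pi_geo :: "int \<Rightarrow> real" where
  "pi_geo m = (if m \<ge> 1 then (1/2) ^ nat m else 0)"

definition q_rw :: "real \<Rightarrow> int \<Rightarrow> int \<Rightarrow> real" where
  "q_rw \<theta> m y = (if y = m + 1 then \<theta> else if y = m - 1 then 1 - \<theta> else 0)"

definition weight_pmf :: "real \<Rightarrow> real \<Rightarrow> real \<Rightarrow> real pmf" where
  "weight_pmf b \<epsilon> s = map_pmf (\<lambda>x. (b - \<epsilon>) * of_bool x + \<epsilon>) (bernoulli_pmf s)"

definition noisy_accept :: "real \<Rightarrow> real \<Rightarrow> real \<Rightarrow> real \<Rightarrow> int \<Rightarrow> int \<Rightarrow> real" where
  "noisy_accept b \<epsilon> s \<theta> m y =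
     measure_pmf.expectation (pair_pmf (weight_pmf b \<epsilon> s) (weight_pmf b \<epsilon> s))
       (\<lambda>(u, w). min 1 ((pi_geo y * q_rw \<theta> y m) / (pi_geo m * q_rw \<theta> m y) * (u / w)))"

definition noisy_kernel :: "real \<Rightarrow> real \<Rightarrow> real \<Rightarrow> real \<Rightarrow> int \<Rightarrow> int \<Rightarrow> real" where
  "noisy_kernel b \<epsilon> s \<theta> m y =
     (if y \<noteq> m then q_rw \<theta> m y * noisy_accept b \<epsilon> s \<theta> m y
      else 1 - (\<Sum>z\<in>{m - 1, m + 1}. q_rw \<theta> m z * noisy_accept b \<epsilon> s \<theta> m z))"

(* First-passage probabilities f n i j = P_i(first visit to j (at times >= 1) happens at time n),
   for a nearest-neighbour kernel P on Z (P i k = 0 unless k \<in> {i-1,i,i+1}) *)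
fun first_passage :: "(int \<Rightarrow> int \<Rightarrow> real) \<Rightarrow> nat \<Rightarrow> int \<Rightarrow> int \<Rightarrow> real" where
  "first_passage P 0 i j = 0"
| "first_passage P (Suc 0) i j = P i j"
| "first_passage P (Suc (Suc n)) i j =
     (\<Sum>k\<in>{i - 1..i + 1} - {j}. P i k * first_passage P (Suc n) k j)"

definition return_prob :: "(int \<Rightarrow> int \<Rightarrow> real) \<Rightarrow> int \<Rightarrow> real" where
  "return_prob P i = (\<Sum>n. first_passage P (Suc n) i i)"

definition transient_chain :: "(int \<Rightarrow> int \<Rightarrow> real) \<Rightarrow> bool" where
  "transient_chain P \<longleftrightarrow>
     (\<forall>i \<ge> 1. summable (\<lambda>n. first_passage P (Suc n) i i) \<and> return_prob P i < 1)"

end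

theory Submission imports Defs begin

text \<open>
For \<open>\<theta> = 9/10\<close> the target ratio for an upward move is \<open>1/18\<close>, but with probability \<open>1/4\<close>
the noise ratio \<open>U/W\<close> equals \<open>b/\<epsilon> = 199\<close>, so the move is accepted with probability at least
\<open>1/4\<close>. Hence the chain goes up with probability at least \<open>9/40\<close> and down with probability at
most \<open>1/10\<close>. Against such a drift, \<open>h(k) = (1/2)^(k - j)\<close> for \<open>k > j\<close> (and \<open>1\<close> below \<open>j\<close>) is
superharmonic off \<open>j\<close>, so it dominates the probability of ever hitting \<open>j\<close>; one step from \<open>j\<close>
then bounds the return probability to \<open>j\<close> away from \<open>1\<close>.
\<close>

lemma first_passage_nonneg:
  assumes "\<And>a b. P a b \<ge> 0"
  shows "first_passage P n i j \<ge> 0"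
  using assms
  by (induction P n i j rule: first_passage.induct) (auto intro!: sum_nonneg mult_nonneg_nonneg)

lemma sum_first_passage_Suc:
  "(\<Sum>m<Suc n. first_passage P (Suc m) k j) =
     P k j + (\<Sum>k'\<in>{k - 1..k + 1} - {j}. P k k' * (\<Sum>m<n. first_passage P (Suc m) k' j))"
proof -
  have "(\<Sum>m<Suc n. first_passage P (Suc m) k j) =
      P k j + (\<Sum>m<n. \<Sum>k'\<in>{k - 1..k + 1} - {j}. P k k' * first_passage P (Suc m) k' j)"
    by (subst sum.lessThan_Suc_shift) simp
  also have "\<dots> = P k j + (\<Sum>k'\<in>{k - 1..k + 1} - {j}. P k k' * (\<Sum>m<n. first_passage P (Suc m) k' j))"
    by (subst sum.swap) (simp add: sum_distrib_left)
  finally show ?thesis .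
qed

lemma sum_neighbours:
  fixes f :: "int \<Rightarrow> 'a::comm_monoid_add"
  shows "(\<Sum>k'\<in>{k - 1..k + 1}. f k') = f (k - 1) + f k + f (k + 1)"
proof -
  have "{k - 1..k + 1} = {k - 1, k, k + 1}" by auto
  then show ?thesis by (simp add: add.assoc)
qed

definition geometric_escape :: "real \<Rightarrow> int \<Rightarrow> int \<Rightarrow> real" where
  "geometric_escape \<rho> j k = (if k \<le> j then 1 else \<rho> ^ nat (k - j))"

locale nearest_neighbour_kernel =
  fixes P :: "int \<Rightarrow> int \<Rightarrow> real"
  assumes nonneg: "\<And>a b. P a b \<ge> 0"
    and row_sum: "\<And>a. P a (a - 1) + P a a + P a (a + 1) = 1"
    and vanishes: "\<And>a b. b \<notin> {a - 1, a, a + 1} \<Longrightarrow> P a b = 0"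
begin

abbreviation step_mean :: "(int \<Rightarrow> real) \<Rightarrow> int \<Rightarrow> real" where
  "step_mean h k \<equiv> \<Sum>k'\<in>{k - 1..k + 1}. P k k' * h k'"

lemma step_mean_split:
  assumes "h j = 1"
  shows "step_mean h k = P k j + (\<Sum>k'\<in>{k - 1..k + 1} - {j}. P k k' * h k')"
proof (cases "j \<in> {k - 1..k + 1}")
  case True
  then show ?thesis by (simp add: sum_diff1 assms)
next
  case False
  then have "P k j = 0" by (intro vanishes) auto
  with False show ?thesis by simp
qed

lemma sum_first_passage_le_step_mean:
  assumes h_nonneg: "\<And>k. h k \<ge> 0" and h_target: "h j = 1"
    and superharmonic: "\<And>k. k \<noteq> j \<Longrightarrow> step_mean h k \<le> h k"
  shows "(\<Sum>m<n. first_passage P (Suc m) k j) \<le> step_mean h k"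
proof (induction n arbitrary: k)
  case 0
  show ?case by (simp add: sum_nonneg nonneg h_nonneg)
next
  case (Suc n)
  have "(\<Sum>m<Suc n. first_passage P (Suc m) k j) =
      P k j + (\<Sum>k'\<in>{k - 1..k + 1} - {j}. P k k' * (\<Sum>m<n. first_passage P (Suc m) k' j))"
    by (rule sum_first_passage_Suc)
  also have "\<dots> \<le> P k j + (\<Sum>k'\<in>{k - 1..k + 1} - {j}. P k k' * h k')"
  proof (intro add_left_mono sum_mono mult_left_mono nonneg)
    fix k' assume "k' \<in> {k - 1..k + 1} - {j}"
    then show "(\<Sum>m<n. first_passage P (Suc m) k' j) \<le> h k'"
      using Suc.IH[of k'] superharmonic[of k'] by auto
  qed
  also have "\<dots> = step_mean h k"
    using step_mean_split[of h j k] h_target by simp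
  finally show ?case .
qed

lemma transient_chain_if_escape_functions:
  assumes "\<And>i. i \<ge> 1 \<Longrightarrow> \<exists>h. (\<forall>k. h k \<ge> 0) \<and> h i = 1 \<and>
             (\<forall>k. k \<noteq> i \<longrightarrow> step_mean h k \<le> h k) \<and> step_mean h i < 1"
  shows "transient_chain P"
  unfolding transient_chain_def return_prob_def
proof (intro allI impI conjI)
  fix i :: int
  assume "i \<ge> 1"
  then obtain h where h: "\<And>k. h k \<ge> 0" "h i = 1" "\<And>k. k \<noteq> i \<Longrightarrow> step_mean h k \<le> h k"
    and escape: "step_mean h i < 1"
    using assms by blast
  have partial_sums: "\<And>n. (\<Sum>m<n. first_passage P (Suc m) i i) \<le> step_mean h i"
    using h by (rule sum_first_passage_le_step_mean)
  show summable: "summable (\<lambda>n. first_passage P (Suc n) i i)"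
    using partial_sums
    by (intro bounded_imp_summable[of _ "step_mean h i"] first_passage_nonneg nonneg)
       (metis lessThan_Suc_atMost)
  have "(\<Sum>n. first_passage P (Suc n) i i) \<le> step_mean h i"
    by (rule suminf_le_const[OF summable partial_sums])
  with escape show "(\<Sum>n. first_passage P (Suc n) i i) < 1" by linarith
qed

lemma geometric_escape_superharmonic:
  assumes \<rho>: "0 \<le> \<rho>" "\<rho> \<le> 1"
    and drift: "j < k \<Longrightarrow> P k (k - 1) \<le> \<rho> * P k (k + 1)" and "k \<noteq> j"
  shows "step_mean (geometric_escape \<rho> j) k \<le> geometric_escape \<rho> j k"
proof (cases "k < j")
  case True
  then show ?thesis using row_sum[of k] by (simp add: sum_neighbours geometric_escape_def)
next
  case False
  define e where "e = nat (k - 1 - j)"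
  have "nat (k - j) = Suc e" "nat (k + 1 - j) = Suc (Suc e)"
    using False \<open>k \<noteq> j\<close> by (simp_all add: e_def flip: Suc_nat_eq_nat_zadd1)
  then have h_values: "geometric_escape \<rho> j (k - 1) = \<rho> ^ e"
      "geometric_escape \<rho> j k = \<rho> ^ e * \<rho>" "geometric_escape \<rho> j (k + 1) = \<rho> ^ e * \<rho>\<^sup>2"
    using False \<open>k \<noteq> j\<close> by (simp_all add: geometric_escape_def e_def power2_eq_square)
  have "step_mean (geometric_escape \<rho> j) k
      = \<rho> ^ e * (P k (k - 1) + P k k * \<rho> + P k (k + 1) * \<rho>\<^sup>2)"
    unfolding sum_neighbours h_values by (simp add: algebra_simps)
  also have "\<dots> \<le> \<rho> ^ e * \<rho>"
  proof (rule mult_left_mono)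
    have stay: "P k k = 1 - P k (k - 1) - P k (k + 1)"
      using row_sum[of k] by simp
    have "P k (k - 1) + P k k * \<rho> + P k (k + 1) * \<rho>\<^sup>2 - \<rho>
        = (1 - \<rho>) * (P k (k - 1) - \<rho> * P k (k + 1))"
      unfolding stay by (simp add: algebra_simps power2_eq_square)
    also have "\<dots> \<le> 0"
      using drift \<rho> False \<open>k \<noteq> j\<close> by (simp add: mult_nonneg_nonpos)
    finally show "P k (k - 1) + P k k * \<rho> + P k (k + 1) * \<rho>\<^sup>2 \<le> \<rho>" by simp
  qed (use \<rho> in simp)
  also have "\<dots> = geometric_escape \<rho> j k"
    by (simp add: h_values)
  finally show ?thesis .
qed

lemma step_mean_geometric_escape_target:
  "step_mean (geometric_escape \<rho> j) j = 1 - (1 - \<rho>) * P j (j + 1)"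
  unfolding sum_neighbours using row_sum[of j] by (simp add: geometric_escape_def algebra_simps)

theorem transient_chain_if_drift:
  assumes \<rho>: "0 \<le> \<rho>" "\<rho> < 1"
    and drift: "\<And>k. k \<ge> 2 \<Longrightarrow> P k (k - 1) \<le> \<rho> * P k (k + 1)"
    and up: "\<And>j. j \<ge> 1 \<Longrightarrow> P j (j + 1) > 0"
  shows "transient_chain P"
proof (rule transient_chain_if_escape_functions)
  fix i :: int
  assume "i \<ge> 1"
  have "step_mean (geometric_escape \<rho> i) k \<le> geometric_escape \<rho> i k" if "k \<noteq> i" for k
    using \<rho> drift \<open>i \<ge> 1\<close> that by (intro geometric_escape_superharmonic) auto
  moreover have "step_mean (geometric_escape \<rho> i) i < 1"
    using \<rho> up[OF \<open>i \<ge> 1\<close>] by (simp add: step_mean_geometric_escape_target)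
  ultimately show "\<exists>h. (\<forall>k. h k \<ge> 0) \<and> h i = 1 \<and> (\<forall>k. k \<noteq> i \<longrightarrow> step_mean h k \<le> h k) \<and>
               step_mean h i < 1"
    using \<rho> by (intro exI[of _ "geometric_escape \<rho> i"]) (auto simp: geometric_escape_def)
qed

end

lemma expectation_pair_weight_pmf_half:
  fixes g :: "real \<Rightarrow> real \<Rightarrow> real"
  shows "measure_pmf.expectation (pair_pmf (weight_pmf b \<epsilon> (1/2)) (weight_pmf b \<epsilon> (1/2))) (\<lambda>(u, w). g u w)
       = (g b b + g b \<epsilon> + g \<epsilon> b + g \<epsilon> \<epsilon>) / 4"
proof -
  let ?f = "\<lambda>x::bool. (b - \<epsilon>) * of_bool x + \<epsilon>"
  let ?coins = "pair_pmf (bernoulli_pmf (1/2)) (bernoulli_pmf (1/2))"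
  have "pair_pmf (weight_pmf b \<epsilon> (1/2)) (weight_pmf b \<epsilon> (1/2))
      = map_pmf (\<lambda>(x, y). (?f x, ?f y)) ?coins"
    unfolding weight_pmf_def by (rule map_pair[symmetric])
  then have "measure_pmf.expectation (pair_pmf (weight_pmf b \<epsilon> (1/2)) (weight_pmf b \<epsilon> (1/2)))
      (\<lambda>(u, w). g u w) = measure_pmf.expectation ?coins (\<lambda>(x, y). g (?f x) (?f y))"
    by (simp add: integral_map_pmf split_def)
  also have "\<dots> = (\<Sum>a\<in>UNIV. (\<lambda>(x, y). g (?f x) (?f y)) a * pmf ?coins a)"
    by (rule integral_measure_pmf_real) auto
  also have "\<dots> = (g b b + g b \<epsilon> + g \<epsilon> b + g \<epsilon> \<epsilon>) / 4"
    by (simp add: UNIV_Times_UNIV[symmetric] UNIV_bool pmf_pair)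
  finally show ?thesis .
qed

definition mh_ratio :: "real \<Rightarrow> int \<Rightarrow> int \<Rightarrow> real" where
  "mh_ratio \<theta> m y = (pi_geo y * q_rw \<theta> y m) / (pi_geo m * q_rw \<theta> m y)"

lemma noisy_accept_half:
  assumes "b \<noteq> 0" "\<epsilon> \<noteq> 0"
  shows "noisy_accept b \<epsilon> (1/2) \<theta> m y =
    (2 * min 1 (mh_ratio \<theta> m y) + min 1 (mh_ratio \<theta> m y * (b / \<epsilon>))
       + min 1 (mh_ratio \<theta> m y * (\<epsilon> / b))) / 4"
  unfolding noisy_accept_def expectation_pair_weight_pmf_half
  using assms by (simp add: mh_ratio_def)

lemma mh_ratio_nonneg: "0 \<le> \<theta> \<Longrightarrow> \<theta> \<le> 1 \<Longrightarrow> mh_ratio \<theta> m y \<ge> 0"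
  unfolding mh_ratio_def pi_geo_def q_rw_def by auto

lemma mh_ratio_up: "m \<ge> 1 \<Longrightarrow> 0 < \<theta> \<Longrightarrow> \<theta> < 1 \<Longrightarrow> mh_ratio \<theta> m (m + 1) = (1 - \<theta>) / (2 * \<theta>)"
  by (simp add: mh_ratio_def pi_geo_def q_rw_def nat_add_distrib)

lemma noisy_accept_half_bounds:
  assumes "0 < b" "0 < \<epsilon>" "0 \<le> \<theta>" "\<theta> \<le> 1"
  shows "0 \<le> noisy_accept b \<epsilon> (1/2) \<theta> m y" "noisy_accept b \<epsilon> (1/2) \<theta> m y \<le> 1"
  using assms mh_ratio_nonneg[of \<theta> m y] by (auto simp: noisy_accept_half)

lemma noisy_accept_half_up:
  assumes "0 < b" "0 < \<epsilon>" "0 < \<theta>" "\<theta> < 1" "m \<ge> 1"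
  shows "noisy_accept b \<epsilon> (1/2) \<theta> m (m + 1) \<ge> min 1 ((1 - \<theta>) / (2 * \<theta>) * (b / \<epsilon>)) / 4"
  using assms mh_ratio_nonneg[of \<theta> m "m + 1"] by (simp add: noisy_accept_half mh_ratio_up)

lemma nearest_neighbour_kernel_noisy_kernel:
  assumes "0 < b" "0 < \<epsilon>" "0 \<le> \<theta>" "\<theta> \<le> 1"
  shows "nearest_neighbour_kernel (noisy_kernel b \<epsilon> (1/2) \<theta>)"
proof
  let ?a = "noisy_accept b \<epsilon> (1/2) \<theta>"
  have move: "q_rw \<theta> m y * ?a m y \<le> q_rw \<theta> m y" "q_rw \<theta> m y * ?a m y \<ge> 0" for m y
    using noisy_accept_half_bounds[OF assms] assms
    by (auto simp: q_rw_def intro: mult_left_le)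
  fix m y :: int
  show "noisy_kernel b \<epsilon> (1/2) \<theta> m y \<ge> 0"
    using move[of m "m - 1"] move[of m "m + 1"] move[of m y] assms
    by (simp add: noisy_kernel_def q_rw_def)
  show "y \<notin> {m - 1, m, m + 1} \<Longrightarrow> noisy_kernel b \<epsilon> (1/2) \<theta> m y = 0"
    by (simp add: noisy_kernel_def q_rw_def)
qed (simp add: noisy_kernel_def)

theorem proposition2p2:
  shows "\<exists>b \<epsilon> \<theta> :: real. b > 1 \<and> 0 < \<epsilon> \<and> \<epsilon> < 1 \<and> 0 < \<theta> \<and> \<theta> < 1 \<and>
           transient_chain (noisy_kernel b \<epsilon> ((1 - \<epsilon>) / (b - \<epsilon>)) \<theta>)"
proof -
  define b \<epsilon> \<theta> :: real where "b = 199/100" and "\<epsilon> = 1/100" and "\<theta> = 9/10"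
  note params = b_def \<epsilon>_def \<theta>_def
  let ?P = "noisy_kernel b \<epsilon> (1/2) \<theta>"
  interpret nearest_neighbour_kernel ?P
    by (rule nearest_neighbour_kernel_noisy_kernel) (simp_all add: params)
  have up: "?P k (k + 1) \<ge> 9/40" if "k \<ge> 1" for k
    using noisy_accept_half_up[of b \<epsilon> \<theta> k] that by (simp add: noisy_kernel_def q_rw_def params)
  have down: "?P k (k - 1) \<le> 1/10" for k
    using noisy_accept_half_bounds[of b \<epsilon> \<theta> k "k - 1"] by (simp add: noisy_kernel_def q_rw_def params)
  have "transient_chain ?P"
  proof (rule transient_chain_if_drift[of "1/2"])
    show "?P k (k - 1) \<le> 1/2 * ?P k (k + 1)" if "k \<ge> 2" for k
      using up[of k] down[of k] that by linarith
    show "?P j (j + 1) > 0" if "j \<ge> 1" for j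
      using up[OF that] by linarith
  qed simp_all
  moreover have "(1 - \<epsilon>) / (b - \<epsilon>) = 1/2" by (simp add: params)
  ultimately show ?thesis by (intro exI[of _ b] exI[of _ \<epsilon>] exI[of _ \<theta>]) (simp add: params)
qed

end
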